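(* Let ${\mathbf{x}}^* \in \mathbb{R}^n$ with ${\mathbf{x}}^* \geq 0$ componentwise, and let $\mathcal{J} = \mathrm{supp}({\mathbf{x}}^* )$, so ${\mathbf{x}}^* = \sum_{j\in\mathcal{J}} x_j^* {\mathbf{e}}_j$. Assume there exists a vector ${\mathbf{c}} \in \mathbb{R}^n$ such that $$\frac{P {\mathbf{e}}_j}{\| P {\mathbf{e}}_j \|_2} \cdot {\mathbf{c}} = 1 \quad \forall j \in \mathcal{J}, \qquad \frac{P {\mathbf{e}}_i}{\| P {\mathbf{e}}_i \|_2} \cdot {\mathbf{c}} < 1 \quad \forall i \in \mathcal{J}^c.$$ Let $s \in [\|{\mathbf{x}}^*\|_\infty, \infty]$. Then every solution ${\mathbf{y}}$ of $$\min_{0 \leq {\mathbf{x}} \leq s} \| W {\mathbf{x}} \|_1 \quad \text{subject to} \quad A {\mathbf{x}} = A {\mathbf{x}}^* \qquad (\ast)$$ satisfies $\mathrm{supp}({\mathbf{y}}) \subseteq \mathrm{supp}({\mathbf{x}}^* )$. Moreover, ${\mathbf{x}}^*$ is a solution of $(\ast)$.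
   Context: $A \in \mathbb{R}^{m\times n}$ is a matrix, $A^\dagger$ its Moore–Penrose pseudoinverse, and $P = A^\dagger A$ the orthogonal projection of $\mathbb{R}^n$ onto $\mathcal{N}(A)^\perp$. ${\mathbf{e}}_1,\dots,{\mathbf{e}}_n$ are the standard unit vectors, and it is assumed that no ${\mathbf{e}}_i$ lies in $\mathcal{N}(A)$, so $w_i := \|P{\mathbf{e}}_i\|_2 > 0$ for all $i$. $W = \mathrm{diag}(w_1,\dots,w_n)$. The constraint $0 \le {\mathbf{x}} \le s$ is componentwise; $s=\infty$ means only ${\mathbf{x}}\ge 0$ is imposed. $\mathcal{J}^c$ denotes the complement of $\mathcal{J}$ in $\{1,\dots,n\}$. *)

theory Defs
  imports "HOL-Analysis.Analysis"
begin

definition pinv :: "real^'n^'m \<Rightarrow> real^'m^'n" where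
  "pinv A = (THE X. A ** X ** A = A \<and> X ** A ** X = X \<and>
                    transpose (A ** X) = A ** X \<and> transpose (X ** A) = X ** A)"

text \<open>P = pinv A * A, the orthogonal projection onto the orthogonal complement of null A.\<close>
definition projP :: "real^'n^'m \<Rightarrow> real^'n^'n" where
  "projP A = pinv A ** A"

definition wgt :: "real^'n^'m \<Rightarrow> 'n \<Rightarrow> real" where
  "wgt A i = norm (projP A *v axis i 1)"

definition wl1 :: "real^'n^'m \<Rightarrow> real^'n \<Rightarrow> real" where
  "wl1 A x = (\<Sum>i\<in>UNIV. \<bar>wgt A i * x $ i\<bar>)"

definition supp :: "real^'n \<Rightarrow> 'n set" where
  "supp x = {i. x $ i \<noteq> 0}"

definition feasible :: "real^'n^'m \<Rightarrow> real^'m \<Rightarrow> ereal \<Rightarrow> real^'n \<Rightarrow> bool" where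
  "feasible A b s x \<longleftrightarrow> (\<forall>i. 0 \<le> x $ i \<and> ereal (x $ i) \<le> s) \<and> A *v x = b"

definition is_solution :: "real^'n^'m \<Rightarrow> real^'m \<Rightarrow> ereal \<Rightarrow> real^'n \<Rightarrow> bool" where
  "is_solution A b s y \<longleftrightarrow> feasible A b s y \<and>
     (\<forall>z. feasible A b s z \<longrightarrow> wl1 A y \<le> wl1 A z)"

end

theory Submission
  imports Defs
begin

text \<open>
  Put \<open>g i = P e\<^sub>i \<bullet> c\<close>. The hypotheses on \<open>c\<close> say \<open>g \<le> w\<close>, with equality exactly on
  \<open>supp x\<^sup>*\<close>. Since \<open>P\<close> is a left multiple of \<open>A\<close>, the linear form \<open>z \<mapsto> P z \<bullet> c = \<Sum> z\<^sub>i g\<^sub>i\<close>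
  is constant on the affine set \<open>A z = A x\<^sup>*\<close>. For feasible \<open>z \<ge> 0\<close> this gives
  \<open>\<parallel>W z\<parallel>\<^sub>1 - \<parallel>W x\<^sup>*\<parallel>\<^sub>1 = \<Sum> z\<^sub>i (w\<^sub>i - g\<^sub>i) \<ge> 0\<close>, and the gap vanishes only if \<open>z\<close> is
  supported where \<open>g = w\<close>, i.e. on \<open>supp x\<^sup>*\<close>.
\<close>

lemma inner_matrix_vector_mult_eq_sum_axis:
  fixes M :: "real^'n^'k" and z :: "real^'n" and c :: "real^'k"
  shows "(M *v z) \<bullet> c = (\<Sum>i\<in>UNIV. z $ i * ((M *v axis i 1) \<bullet> c))"
proof -
  have col: "(M *v axis i 1) $ k = M $ k $ i" for i k
    by (simp add: matrix_vector_mult_def axis_def if_distrib sum.delta cong: if_cong)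
  have "(M *v z) \<bullet> c = (\<Sum>k\<in>UNIV. (\<Sum>i\<in>UNIV. M $ k $ i * z $ i) * c $ k)"
    by (simp add: inner_vec_def matrix_vector_mult_def mult.commute)
  also have "\<dots> = (\<Sum>i\<in>UNIV. \<Sum>k\<in>UNIV. z $ i * (M $ k $ i * c $ k))"
    by (subst sum.swap) (simp add: sum_distrib_left sum_distrib_right algebra_simps)
  also have "\<dots> = (\<Sum>i\<in>UNIV. z $ i * ((M *v axis i 1) \<bullet> c))"
    by (simp add: inner_vec_def col sum_distrib_left mult.commute)
  finally show ?thesis .
qed

lemma projP_eq_if_same_image:
  assumes "A *v z = A *v x"
  shows "projP A *v z = projP A *v x"
  using assms by (simp add: projP_def matrix_vector_mul_assoc[symmetric])

lemma wl1_nonneg_eq_sum: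
  assumes "\<And>i. 0 \<le> z $ i"
  shows "wl1 A z = (\<Sum>i\<in>UNIV. z $ i * wgt A i)"
  unfolding wl1_def
  by (rule sum.cong) (simp_all add: abs_mult wgt_def assms mult.commute)

lemma inner_normalized_eq_iff:
  fixes v c :: "'a::real_inner"
  assumes "v \<noteq> 0"
  shows "((1 / norm v) *\<^sub>R v) \<bullet> c = 1 \<longleftrightarrow> v \<bullet> c = norm v"
    and "((1 / norm v) *\<^sub>R v) \<bullet> c < 1 \<longleftrightarrow> v \<bullet> c < norm v"
  using assms by (auto simp: field_simps)

lemma feasible_if_nonneg_infnorm_le:
  assumes "\<And>i. 0 \<le> x $ i" and "ereal (infnorm x) \<le> s"
  shows "feasible A (A *v x) s x"
  unfolding feasible_def
proof (intro conjI allI)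
  fix i
  show "0 \<le> x $ i" by (rule assms(1))
  have "x $ i \<le> infnorm x"
    using component_le_infnorm_cart[of x i] assms(1)[of i] by simp
  then show "ereal (x $ i) \<le> s"
    using assms(2) by (metis ereal_less_eq(3) order_trans)
qed simp

lemma wl1_gap_eq_certificate_sum:
  assumes z_nonneg: "\<And>i. 0 \<le> z $ i" and x_nonneg: "\<And>i. 0 \<le> x $ i"
    and same_image: "A *v z = A *v x"
    and cert_on: "\<And>i. i \<in> supp x \<Longrightarrow> (projP A *v axis i 1) \<bullet> c = wgt A i"
  shows "wl1 A z - wl1 A x = (\<Sum>i\<in>UNIV. z $ i * (wgt A i - (projP A *v axis i 1) \<bullet> c))"
proof -
  let ?g = "\<lambda>i. (projP A *v axis i 1) \<bullet> c"
  have "(\<Sum>i\<in>UNIV. z $ i * ?g i) = (projP A *v z) \<bullet> c"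
    by (rule inner_matrix_vector_mult_eq_sum_axis[symmetric])
  also have "\<dots> = (projP A *v x) \<bullet> c"
    using projP_eq_if_same_image[OF same_image] by simp
  also have "\<dots> = (\<Sum>i\<in>UNIV. x $ i * ?g i)"
    by (rule inner_matrix_vector_mult_eq_sum_axis)
  also have "\<dots> = wl1 A x"
    unfolding wl1_nonneg_eq_sum[OF x_nonneg]
  proof (rule sum.cong)
    show "x $ i * ?g i = x $ i * wgt A i" for i
      by (cases "i \<in> supp x") (simp_all add: supp_def cert_on)
  qed simp
  finally have "wl1 A x = (\<Sum>i\<in>UNIV. z $ i * ?g i)" ..
  then show ?thesis
    by (simp add: wl1_nonneg_eq_sum[OF z_nonneg] right_diff_distrib sum_subtractf)
qed

lemma supp_subset_if_gap_nonpos: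
  fixes z :: "real^'n"
  assumes "\<And>i. 0 \<le> z $ i" and "\<And>i. g i \<le> w i" and "\<And>i. i \<notin> J \<Longrightarrow> g i < w i"
    and "(\<Sum>i\<in>UNIV. z $ i * (w i - g i)) \<le> 0"
  shows "supp z \<subseteq> J"
proof
  fix i assume "i \<in> supp z"
  have terms_nonneg: "\<And>j. 0 \<le> z $ j * (w j - g j)"
    using assms(1,2) by (simp add: mult_nonneg_nonneg)
  then have "(\<Sum>j\<in>UNIV. z $ j * (w j - g j)) = 0"
    using assms(4) sum_nonneg[of UNIV] by (meson antisym)
  then have "z $ i * (w i - g i) = 0"
    using terms_nonneg by (subst (asm) sum_nonneg_eq_0_iff) auto
  then have "g i = w i" using \<open>i \<in> supp z\<close> by (simp add: supp_def)
  then show "i \<in> J" using assms(3) by force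
qed

lemma certificate_solution_supp:
  assumes x_nonneg: "\<And>i. 0 \<le> x $ i" and x_feasible: "feasible A (A *v x) s x"
    and cert_on: "\<And>i. i \<in> supp x \<Longrightarrow> (projP A *v axis i 1) \<bullet> c = wgt A i"
    and cert_off: "\<And>i. i \<notin> supp x \<Longrightarrow> (projP A *v axis i 1) \<bullet> c < wgt A i"
  shows "is_solution A (A *v x) s x"
    and "is_solution A (A *v x) s y \<Longrightarrow> supp y \<subseteq> supp x"
proof -
  let ?g = "\<lambda>i. (projP A *v axis i 1) \<bullet> c"
  have cert_le: "?g i \<le> wgt A i" for i
    using cert_on[of i] cert_off[of i] by (cases "i \<in> supp x") auto
  have gap: "wl1 A z - wl1 A x = (\<Sum>i\<in>UNIV. z $ i * (wgt A i - ?g i))"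
    and gap_nonneg: "0 \<le> (\<Sum>i\<in>UNIV. z $ i * (wgt A i - ?g i))"
    if "feasible A (A *v x) s z" for z
  proof -
    from that have "\<And>i. 0 \<le> z $ i" and "A *v z = A *v x"
      by (simp_all add: feasible_def)
    then show "wl1 A z - wl1 A x = (\<Sum>i\<in>UNIV. z $ i * (wgt A i - ?g i))"
      and "0 \<le> (\<Sum>i\<in>UNIV. z $ i * (wgt A i - ?g i))"
      using wl1_gap_eq_certificate_sum[OF _ x_nonneg _ cert_on] cert_le
      by (simp_all add: sum_nonneg)
  qed
  show "is_solution A (A *v x) s x"
    unfolding is_solution_def
  proof (intro conjI allI impI x_feasible)
    fix z assume "feasible A (A *v x) s z"
    from gap[OF this] gap_nonneg[OF this] show "wl1 A x \<le> wl1 A z" by linarith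
  qed
  show "supp y \<subseteq> supp x" if y_solution: "is_solution A (A *v x) s y"
  proof (rule supp_subset_if_gap_nonpos[where g = ?g and w = "wgt A"])
    show "\<And>i. 0 \<le> y $ i" using y_solution by (simp add: is_solution_def feasible_def)
    have "feasible A (A *v x) s y" and "wl1 A y \<le> wl1 A x"
      using y_solution x_feasible by (simp_all add: is_solution_def)
    with gap show "(\<Sum>i\<in>UNIV. y $ i * (wgt A i - ?g i)) \<le> 0"
      by fastforce
  qed (use cert_le cert_off in auto)
qed

theorem theorem1:
  fixes A :: "real^'n^'m" and xs c :: "real^'n" and s :: ereal
  assumes no_null: "\<And>i. projP A *v axis i 1 \<noteq> 0"
    and xs_nonneg: "\<And>i. 0 \<le> xs $ i"
    and c_on: "\<And>j. j \<in> supp xs \<Longrightarrow>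
        ((1 / norm (projP A *v axis j 1)) *\<^sub>R (projP A *v axis j 1)) \<bullet> c = 1"
    and c_off: "\<And>i. i \<notin> supp xs \<Longrightarrow>
        ((1 / norm (projP A *v axis i 1)) *\<^sub>R (projP A *v axis i 1)) \<bullet> c < 1"
    and s_ge: "ereal (infnorm xs) \<le> s"
  shows "(\<forall>y. is_solution A (A *v xs) s y \<longrightarrow> supp y \<subseteq> supp xs)
         \<and> is_solution A (A *v xs) s xs"
proof -
  have cert_on: "(projP A *v axis i 1) \<bullet> c = wgt A i" if "i \<in> supp xs" for i
    using c_on[OF that] inner_normalized_eq_iff(1)[OF no_null] by (simp add: wgt_def)
  have cert_off: "(projP A *v axis i 1) \<bullet> c < wgt A i" if "i \<notin> supp xs" for i
    using c_off[OF that] inner_normalized_eq_iff(2)[OF no_null] by (simp add: wgt_def)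
  note certificate_solution_supp[OF xs_nonneg
      feasible_if_nonneg_infnorm_le[OF xs_nonneg s_ge] cert_on cert_off]
  then show ?thesis by blast
qed

end
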